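(* Let $G$ be a connected $4$-regular graph and let $H$ be a proper subgraph of $G$ whose number of vertices is not divisible by $3$. Then $H$ contains a vertex of degree at most $3$ in $H$ which does not lie in a connected component of $H$ consisting of a single triangle. *)

theory Defs
  imports Main
begin

definition graph :: "'a set \<Rightarrow> 'a set set \<Rightarrow> bool" where
  "graph V E \<longleftrightarrow> finite V \<and>
     (\<forall>e\<in>E. \<exists>u v. u \<noteq> v \<and> u \<in> V \<and> v \<in> V \<and> e = {u, v})"

definition adj :: "'a set set \<Rightarrow> 'a \<Rightarrow> 'a \<Rightarrow> bool" where
  "adj E u v \<longleftrightarrow> {u, v} \<in> E"

definition degree :: "'a set \<Rightarrow> 'a set set \<Rightarrow> 'a \<Rightarrow> nat" where
  "degree V E v = card {u \<in> V. adj E v u}"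

definition regular :: "nat \<Rightarrow> 'a set \<Rightarrow> 'a set set \<Rightarrow> bool" where
  "regular k V E \<longleftrightarrow> (\<forall>v\<in>V. degree V E v = k)"

definition connected_graph :: "'a set \<Rightarrow> 'a set set \<Rightarrow> bool" where
  "connected_graph V E \<longleftrightarrow> V \<noteq> {} \<and> (\<forall>u\<in>V. \<forall>v\<in>V. (adj E)\<^sup>*\<^sup>* u v)"

definition subgraph :: "'a set \<Rightarrow> 'a set set \<Rightarrow> 'a set \<Rightarrow> 'a set set \<Rightarrow> bool" where
  "subgraph V' E' V E \<longleftrightarrow> graph V' E' \<and> V' \<subseteq> V \<and> E' \<subseteq> E"

definition component :: "'a set \<Rightarrow> 'a set set \<Rightarrow> 'a \<Rightarrow> 'a set" where
  "component V E v = {u \<in> V. (adj E)\<^sup>*\<^sup>* v u}"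

definition in_triangle_component :: "'a set \<Rightarrow> 'a set set \<Rightarrow> 'a \<Rightarrow> bool" where
  "in_triangle_component V E v \<longleftrightarrow>
     card (component V E v) = 3 \<and>
     (\<forall>x\<in>component V E v. \<forall>y\<in>component V E v. x \<noteq> y \<longrightarrow> adj E x y)"

end

theory Submission
  imports Defs
begin

text \<open>Let W be the set of vertices of H outside triangle components. If W is empty, H is a
disjoint union of triangles and 3 divides its order. Otherwise, by assumption every vertex of W
has degree 4 in H, hence keeps all four of its G-neighbours in H; these lie in its H-component,
so W is closed under G-adjacency. Connectivity of G then forces W = V(G) with every edge of G
present in H, i.e. H = G.\<close>

lemma adj_sym: "adj E u v \<longleftrightarrow> adj E v u"
  unfolding adj_def by (simp add: insert_commute)

lemma adj_in_vertices:
  assumes "graph V E" and "adj E u v"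
  shows "u \<in> V" and "v \<in> V"
  using assms unfolding graph_def adj_def by (auto simp: doubleton_eq_iff)

lemma rtranclp_adj_sym:
  assumes "(adj E)\<^sup>*\<^sup>* u v"
  shows "(adj E)\<^sup>*\<^sup>* v u"
  using assms
proof (induction rule: rtranclp_induct)
  case (step y z)
  then show ?case
    using adj_sym[of E y z] by (meson converse_rtranclp_into_rtranclp)
qed simp

lemma component_eq_if_reachable:
  assumes "(adj E)\<^sup>*\<^sup>* v u"
  shows "component V E u = component V E v"
  using assms unfolding component_def
  by (auto dest: rtranclp_adj_sym intro: rtranclp_trans)

lemma in_triangle_component_iff_if_reachable:
  assumes "(adj E)\<^sup>*\<^sup>* v u"
  shows "in_triangle_component V E u \<longleftrightarrow> in_triangle_component V E v"
  using component_eq_if_reachable[OF assms] unfolding in_triangle_component_def by simp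

lemma dvd_card_if_components_card_eq:
  assumes "finite V" and "\<And>v. v \<in> V \<Longrightarrow> card (component V E v) = k"
  shows "k dvd card V"
proof -
  let ?C = "component V E ` V"
  have union: "\<Union>?C = V"
    unfolding component_def by auto
  have disjoint: "c1 \<inter> c2 = {}" if c: "c1 \<in> ?C" "c2 \<in> ?C" and "c1 \<noteq> c2" for c1 c2
  proof (rule ccontr)
    assume "c1 \<inter> c2 \<noteq> {}"
    then obtain a b x where "c1 = component V E a" "c2 = component V E b"
      and "(adj E)\<^sup>*\<^sup>* a x" "(adj E)\<^sup>*\<^sup>* b x"
      using c unfolding component_def by blast
    then have "c1 = c2"
      using component_eq_if_reachable by metis
    with that(3) show False ..
  qed
  have "k * card ?C = card (\<Union>?C)"
    by (rule card_partition) (use assms union disjoint in auto)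
  with union show ?thesis
    by (metis dvd_triv_left)
qed

lemma subgraph_neighbours_eq_if_degree_ge:
  assumes "finite V" and "subgraph V' E' V E" and "degree V E v \<le> degree V' E' v"
  shows "{u \<in> V'. adj E' v u} = {u \<in> V. adj E v u}"
proof -
  have sub: "{u \<in> V'. adj E' v u} \<subseteq> {u \<in> V. adj E v u}"
    using assms(2) unfolding subgraph_def adj_def by auto
  have fin: "finite {u \<in> V. adj E v u}"
    using assms(1) by simp
  have "card {u \<in> V'. adj E' v u} = card {u \<in> V. adj E v u}"
    using card_mono[OF fin sub] assms(3) unfolding degree_def by simp
  then show ?thesis
    using card_subset_eq[OF fin sub] by simp
qed

lemma connected_graph_subset_if_adj_closed:
  assumes "connected_graph V E" and "w \<in> V" and "w \<in> W"
    and closed: "\<And>v u. v \<in> W \<Longrightarrow> adj E v u \<Longrightarrow> u \<in> W"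
  shows "V \<subseteq> W"
proof
  fix v assume "v \<in> V"
  with assms(1,2) have "(adj E)\<^sup>*\<^sup>* w v"
    unfolding connected_graph_def by blast
  then show "v \<in> W"
    by (induction rule: rtranclp_induct) (use \<open>w \<in> W\<close> closed in auto)
qed

lemma subgraph_eq_if_adj_preserved:
  assumes "graph V E" and "subgraph V' E' V E" and "V \<subseteq> V'"
    and preserved: "\<And>v u. v \<in> V \<Longrightarrow> adj E v u \<Longrightarrow> adj E' v u"
  shows "(V', E') = (V, E)"
proof -
  have "E \<subseteq> E'"
  proof
    fix e assume "e \<in> E"
    with assms(1) obtain u v where "u \<in> V" "e = {u, v}"
      unfolding graph_def by blast
    with \<open>e \<in> E\<close> preserved show "e \<in> E'"
      unfolding adj_def by blast
  qed
  with assms(2,3) show ?thesis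
    unfolding subgraph_def by auto
qed

theorem lemmaA16:
  fixes V V' :: "'a set" and E E' :: "'a set set"
  assumes "graph V E"
    and "connected_graph V E"
    and "regular 4 V E"
    and "subgraph V' E' V E"
    and "(V', E') \<noteq> (V, E)"
    and "\<not> 3 dvd card V'"
  shows "\<exists>v\<in>V'. degree V' E' v \<le> 3 \<and> \<not> in_triangle_component V' E' v"
proof (rule ccontr)
  assume contra: "\<not> ?thesis"
  have finite: "finite V" and sub: "V' \<subseteq> V"
    using assms(1,4) unfolding graph_def subgraph_def by auto
  define W where "W = {v \<in> V'. \<not> in_triangle_component V' E' v}"
  have full: "u \<in> V' \<and> adj E' v u" if "v \<in> W" "adj E v u" for v u
  proof -
    have "v \<in> V" and "\<not> degree V' E' v \<le> 3"
      using that(1) contra sub unfolding W_def by auto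
    with assms(3) have "degree V E v \<le> degree V' E' v"
      unfolding regular_def by simp
    with that(2) adj_in_vertices[OF assms(1) that(2)] show ?thesis
      using subgraph_neighbours_eq_if_degree_ge[OF finite assms(4)] by blast
  qed
  have closed: "u \<in> W" if "v \<in> W" "adj E v u" for v u
    using full[OF that] that(1) in_triangle_component_iff_if_reachable[of E' v u V']
    unfolding W_def by auto
  have "\<not> (\<forall>v\<in>V'. in_triangle_component V' E' v)"
  proof
    assume "\<forall>v\<in>V'. in_triangle_component V' E' v"
    then have "3 dvd card V'"
      using finite sub by (intro dvd_card_if_components_card_eq)
        (auto simp: in_triangle_component_def intro: finite_subset)
    with assms(6) show False ..
  qed
  then obtain w where "w \<in> W"
    unfolding W_def by blast
  then have "V \<subseteq> W"
    using sub by (intro connected_graph_subset_if_adj_closed[OF assms(2) _ _ closed])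
      (auto simp: W_def)
  moreover have "W \<subseteq> V'"
    unfolding W_def by blast
  ultimately have "(V', E') = (V, E)"
    using full by (intro subgraph_eq_if_adj_preserved[OF assms(1,4)]) blast+
  with assms(5) show False ..
qed

end
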